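(* Let $R\in\mathbb R$ and let $f:[0,R)\to\mathbb R$ be continuously differentiable and satisfy (h1) $f(0)>0$, $f'(0)=-1$; (h2) $f'$ is strictly increasing and convex; (h3) $f(t)<0$ for some $t\in(0,R)$. Let $\kappa:=\sup_{0<t<R}\frac{-f(t)}{t}$, $\lambda:=\sup\{t\in[0,R):\kappa+f'(t)<0\}$, $\Theta:=\kappa/(2-\kappa)$, and \[\Omega:=\{(t,\varepsilon)\in\mathbb R^2:0\le t<\lambda,\ 0\le\varepsilon\le\kappa t,\ 0<f(t)+\varepsilon\}.\] If $0\le\theta\le\Theta$, $(t,\varepsilon)\in\Omega$, and \[t_+=t-(1+\theta)\frac{f(t)+\varepsilon}{f'(t)},\qquad \varepsilon_+=\varepsilon+2\theta(f(t)+\varepsilon),\] then $(t_+,\varepsilon_+)\in\Omega$, $t<t_+$, $\varepsilon\le\varepsilon_+$, and \[f(t_+)+\varepsilon_+<\Big(\frac{1+\theta^2}{2}\Big)(f(t)+\varepsilon).\] *)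

theory Defs
  imports "HOL-Analysis.Analysis"
begin

definition kappa :: "(real \<Rightarrow> real) \<Rightarrow> real \<Rightarrow> real" where
  "kappa f R = (SUP t\<in>{0<..<R}. - f t / t)"

definition lam :: "(real \<Rightarrow> real) \<Rightarrow> (real \<Rightarrow> real) \<Rightarrow> real \<Rightarrow> real" where
  "lam f f' R = Sup {t \<in> {0..<R}. kappa f R + f' t < 0}"

definition Theta :: "(real \<Rightarrow> real) \<Rightarrow> real \<Rightarrow> real" where
  "Theta f R = kappa f R / (2 - kappa f R)"

definition Omega :: "(real \<Rightarrow> real) \<Rightarrow> (real \<Rightarrow> real) \<Rightarrow> real \<Rightarrow> (real \<times> real) set" where
  "Omega f f' R = {(t, e). 0 \<le> t \<and> t < lam f f' R \<and> 0 \<le> e \<and> e \<le> kappa f R * t \<and> 0 < f t + e}"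

end

theory Submission
  imports Defs
begin

text \<open>Put h u = f u + \<kappa> * u. By the choice of \<kappa>, h is nonnegative but not bounded away
  from 0, and h' = f' + \<kappa> changes sign at \<lambda>. Since h is convex, this forces the Newton
  iterate of h from any t < \<lambda> to stay below \<lambda>. The relaxed step of length
  \<sigma> = (1 + \<theta>)(f t + \<epsilon>) / (- f' t) is shorter than that Newton step, which gives
  t_+ < \<lambda>; the remaining conditions of \<Omega> follow from \<theta> \<le> \<Theta> and from f lying above
  its tangents. For the decrease, convexity of f' bounds f' on [t, L] (L the Newton iterate
  of h) by its chord, whose slope is less than (f' t + \<kappa>)^2 / h t; integrating gives a
  quadratic upper bound for f (t + \<sigma>) that yields the factor (1 + \<theta>^2) / 2.\<close>

lemma mvt_within:
  fixes g g' :: "real \<Rightarrow> real"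
  assumes deriv: "\<And>x. x \<in> S \<Longrightarrow> (g has_real_derivative g' x) (at x within S)"
    and S: "connected S" "u \<in> S" "v \<in> S" and "u < v"
  obtains \<xi> where "u < \<xi>" "\<xi> < v" "g v - g u = g' \<xi> * (v - u)"
proof -
  have uv: "{u..v} \<subseteq> S"
    using S by (rule connected_contains_Icc)
  have "\<exists>\<xi>\<in>{u<..<v}. g v - g u = g' \<xi> * (v - u)"
  proof (rule mvt_simple[OF \<open>u < v\<close>, where f'="\<lambda>x. (*) (g' x)"])
    fix x assume "u \<le> x" "x \<le> v"
    with uv have "(g has_real_derivative g' x) (at x within {u..v})"
      by (intro has_field_derivative_subset[OF deriv]) auto
    then show "(g has_derivative (*) (g' x)) (at x within {u..v})"
      by (simp add: has_field_derivative_def)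
  qed
  with that show ?thesis
    by auto
qed

lemma strict_mono_deriv_above_tangent:
  fixes g g' :: "real \<Rightarrow> real"
  assumes deriv: "\<And>x. x \<in> S \<Longrightarrow> (g has_real_derivative g' x) (at x within S)"
    and "connected S" and mono: "strict_mono_on S g'"
    and u: "u \<in> S" and v: "v \<in> S" and "u \<noteq> v"
  shows "g v + g' v * (u - v) < g u"
proof (cases "u < v")
  case True
  then obtain \<xi> where \<xi>: "u < \<xi>" "\<xi> < v" "g v - g u = g' \<xi> * (v - u)"
    using mvt_within[OF deriv \<open>connected S\<close> u v] by blast
  have "\<xi> \<in> S"
    using connected_contains_Icc[OF \<open>connected S\<close> u v] \<xi> by auto
  then have "g' \<xi> * (v - u) < g' v * (v - u)"
    using \<xi> v True by (simp add: strict_mono_onD[OF mono])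
  with \<xi> show ?thesis
    by (simp add: algebra_simps)
next
  case False
  then have "v < u" using \<open>u \<noteq> v\<close> by simp
  then obtain \<xi> where \<xi>: "v < \<xi>" "\<xi> < u" "g u - g v = g' \<xi> * (u - v)"
    using mvt_within[OF deriv \<open>connected S\<close> v u] by blast
  have "\<xi> \<in> S"
    using connected_contains_Icc[OF \<open>connected S\<close> v u] \<xi> by auto
  then have "g' v * (u - v) < g' \<xi> * (u - v)"
    using \<xi> v \<open>v < u\<close> by (simp add: strict_mono_onD[OF mono])
  with \<xi> show ?thesis
    by (simp add: algebra_simps)
qed

lemma convex_deriv_quadratic_upper_bound:
  fixes g g' :: "real \<Rightarrow> real"
  assumes deriv: "\<And>x. x \<in> S \<Longrightarrow> (g has_real_derivative g' x) (at x within S)"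
    and "connected S" and conv: "convex_on S g'"
    and t: "t \<in> S" and L: "L \<in> S" and "t < L" and u: "t \<le> u" "u \<le> L"
  shows "g u \<le> g t + g' t * (u - t) + (g' L - g' t) / (L - t) * (u - t)\<^sup>2 / 2"
proof (cases "t = u")
  case False
  define m where "m = (g' L - g' t) / (L - t)"
  define \<phi> where "\<phi> x = g x - g t - g' t * (x - t) - m * (x - t)\<^sup>2 / 2" for x
  have tL: "{t..L} \<subseteq> S"
    using \<open>connected S\<close> t L by (rule connected_contains_Icc)
  have chord: "g' x \<le> g' t + m * (x - t)" if "x \<in> {t..L}" for x
    using convex_onD_Icc'[OF convex_on_subset[OF conv tL] that] by (simp add: m_def)
  have d\<phi>: "(\<phi> has_real_derivative g' x - g' t - m * (x - t)) (at x within S)" if "x \<in> S" for x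
    unfolding \<phi>_def using deriv[OF that] by (auto intro!: derivative_eq_intros)
  have "u \<in> S" "t < u"
    using tL u False by auto
  obtain \<xi> where \<xi>: "t < \<xi>" "\<xi> < u" "\<phi> u - \<phi> t = (g' \<xi> - g' t - m * (\<xi> - t)) * (u - t)"
    using mvt_within[OF d\<phi> \<open>connected S\<close> t \<open>u \<in> S\<close> \<open>t < u\<close>] by blast
  moreover have "g' \<xi> - g' t - m * (\<xi> - t) \<le> 0"
    using chord[of \<xi>] \<xi> u by simp
  ultimately have "\<phi> u \<le> 0"
    using u by (simp add: \<phi>_def mult_nonpos_nonneg)
  then show ?thesis
    by (simp add: \<phi>_def m_def)
qed simp

lemma pos_lower_bound_from_tangent:
  fixes h h' :: "real \<Rightarrow> real"
  assumes deriv: "\<And>x. x \<in> S \<Longrightarrow> (h has_real_derivative h' x) (at x within S)"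
    and "connected S" and mono: "strict_mono_on S h'"
    and "t < m" and tm: "{t..<m} \<subseteq> S"
    and desc: "\<And>u. u \<in> S \<Longrightarrow> u < m \<Longrightarrow> h' u < 0"
    and asc: "\<And>u. u \<in> S \<Longrightarrow> m < u \<Longrightarrow> 0 \<le> h' u"
    and tangent: "0 \<le> h t + h' t * (m - t)"
  obtains c where "0 < c" "\<And>u. u \<in> S \<Longrightarrow> c \<le> h u"
proof
  have above: "h v + h' v * (u - v) \<le> h u" if "u \<in> S" "v \<in> S" for u v
    using strict_mono_deriv_above_tangent[OF deriv \<open>connected S\<close> mono that]
    by (cases "u = v") auto
  define p where "p = (t + m) / 2"
  have p: "t < p" "p < m" "p \<in> S" and t: "t \<in> S"
    using \<open>t < m\<close> tm by (auto simp: p_def)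
  have "h' t < h' p" "h' p < 0" "h' t < 0"
    using p t by (auto intro: strict_mono_onD[OF mono] desc)
  \<comment> \<open>the tangents at t and p form a convex minorant of h left of m, with value c at m\<close>
  define c where "c = h t + h' t * (p - t) + h' p * (m - p)"
  have "c - (h t + h' t * (m - t)) = (h' p - h' t) * (m - p)"
    by (simp add: c_def algebra_simps)
  moreover have "0 < (h' p - h' t) * (m - p)"
    using \<open>h' t < h' p\<close> \<open>p < m\<close> by simp
  ultimately show "0 < c"
    using tangent by linarith
  have below_m: "c \<le> h u" if u: "u \<in> S" "u \<le> m" for u
  proof (cases "u \<le> p")
    case True
    have "h' t * (p - t) \<le> h' t * (u - t)" "h' p * (m - p) \<le> 0"
      using True \<open>h' t < 0\<close> \<open>h' p < 0\<close> p by (auto intro: mult_left_mono_neg mult_nonpos_nonneg)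
    with above[OF u(1) t] show ?thesis
      by (simp add: c_def)
  next
    case False
    have "h' p * (m - p) \<le> h' p * (u - p)"
      using u \<open>h' p < 0\<close> by (auto intro: mult_left_mono_neg)
    with above[OF u(1) p(3)] above[OF p(3) t] show ?thesis
      by (simp add: c_def)
  qed
  show "c \<le> h u" if u: "u \<in> S" for u
  proof (cases "u \<le> m")
    case False
    have m: "m \<in> S"
      using connected_contains_Icc[OF \<open>connected S\<close> p(3) u] False p by auto
    obtain \<xi> where \<xi>: "m < \<xi>" "\<xi> < u" "h u - h m = h' \<xi> * (u - m)"
      using mvt_within[OF deriv \<open>connected S\<close> m u] False by auto
    have "\<xi> \<in> S"
      using connected_contains_Icc[OF \<open>connected S\<close> m u] \<xi> by auto
    with \<xi> asc have "0 \<le> h' \<xi> * (u - m)"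
      by simp
    with \<xi>(3) have "h m \<le> h u"
      by simp
    with below_m[OF m] show ?thesis
      by simp
  qed (use below_m u in auto)
qed

text \<open>In the application a = - (f' t + \<kappa>), H = f t + \<kappa> * t and g = f t + \<epsilon>, so that
  \<sigma> below is the length t_+ - t of the relaxed step.\<close>

context
  fixes \<kappa> \<theta> a g H :: real
  assumes \<kappa>: "0 < \<kappa>" and \<theta>: "0 \<le> \<theta>" "\<theta> * (2 - \<kappa>) \<le> \<kappa>"
    and a: "0 < a" "a + \<kappa> \<le> 1" and g: "0 < g" "g \<le> H"
begin

lemma relaxed_step_below_newton_step:
  defines "\<sigma> \<equiv> (1 + \<theta>) * g / (a + \<kappa>)"
  shows "a * \<sigma> < H"
proof -
  have "\<theta> * a \<le> \<theta> * (1 - \<kappa>)"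
    using a \<theta>(1) by (intro mult_left_mono) auto
  with \<theta> \<kappa> have "\<theta> * a < \<kappa>"
    by (cases "\<theta> = 0") (auto simp: algebra_simps)
  have "(1 + \<theta>) * g * a = g * a + (\<theta> * a) * g"
    by (simp add: algebra_simps)
  also have "\<dots> < g * a + \<kappa> * g"
    using \<open>\<theta> * a < \<kappa>\<close> g by simp
  also have "\<dots> \<le> H * a + \<kappa> * H"
    using g a \<kappa> by (intro add_mono) simp_all
  finally show ?thesis
    using a \<kappa> by (simp add: \<sigma>_def pos_divide_less_eq algebra_simps)
qed

lemma relaxed_step_error_growth:
  defines "\<sigma> \<equiv> (1 + \<theta>) * g / (a + \<kappa>)"
  shows "2 * \<theta> * g \<le> \<kappa> * \<sigma>"
proof -
  have "2 * \<theta> * g \<le> \<kappa> * ((1 + \<theta>) * g)"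
    using mult_right_mono[OF \<theta>(2), of g] g by (simp add: algebra_simps)
  also have "(1 + \<theta>) * g \<le> \<sigma>"
    using a \<kappa> g \<theta> by (simp add: \<sigma>_def le_divide_eq mult_left_le)
  finally show ?thesis
    using \<kappa> by simp
qed

lemma relaxed_step_quadratic_term:
  defines "\<sigma> \<equiv> (1 + \<theta>) * g / (a + \<kappa>)"
  shows "a\<^sup>2 * \<sigma>\<^sup>2 / (2 * H) \<le> (1 - \<theta>)\<^sup>2 * g / 2"
proof -
  have "\<theta> * (2 * a + \<kappa>) \<le> \<theta> * (2 - \<kappa>)"
    using a \<theta>(1) by (intro mult_left_mono) auto
  with \<theta>(2) have "(1 + \<theta>) * a * g \<le> (1 - \<theta>) * (a + \<kappa>) * g"
    using g by (intro mult_right_mono) (auto simp: algebra_simps)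
  then have "(1 + \<theta>) * a * g / (a + \<kappa>) \<le> (1 - \<theta>) * (a + \<kappa>) * g / (a + \<kappa>)"
    using a \<kappa> by (intro divide_right_mono) auto
  then have "a * \<sigma> \<le> (1 - \<theta>) * g"
    using a \<kappa> by (simp add: \<sigma>_def mult.commute mult.left_commute)
  moreover have "0 \<le> a * \<sigma>"
    using a \<kappa> g \<theta> by (simp add: \<sigma>_def)
  ultimately have "(a * \<sigma>)\<^sup>2 \<le> ((1 - \<theta>) * g)\<^sup>2"
    by (intro power_mono)
  also have "\<dots> = (1 - \<theta>)\<^sup>2 * g * g"
    by (simp add: power2_eq_square)
  also have "\<dots> \<le> (1 - \<theta>)\<^sup>2 * g * H"
    using g by (intro mult_left_mono) auto
  finally show ?thesis
    using g by (simp add: power_mult_distrib divide_le_eq)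
qed

end

locale newton_setting =
  fixes f f' :: "real \<Rightarrow> real" and R :: real
  assumes deriv: "\<And>x. x \<in> {0..<R} \<Longrightarrow> (f has_real_derivative f' x) (at x within {0..<R})"
    and f_0_pos: "0 < f 0" and f'_0: "f' 0 = -1"
    and f'_strict_mono: "strict_mono_on {0..<R} f'"
    and f'_convex: "convex_on {0..<R} f'"
    and f_neg: "\<exists>s\<in>{0<..<R}. f s < 0"
begin

abbreviation "\<kappa> \<equiv> kappa f R"
abbreviation "\<Lambda> \<equiv> lam f f' R"

lemma R_pos: "0 < R"
  using f_neg by auto

lemma f_above_tangent:
  assumes "u \<in> {0..<R}" "v \<in> {0..<R}" "u \<noteq> v"
  shows "f v + f' v * (u - v) < f u"
  using strict_mono_deriv_above_tangent[OF deriv _ f'_strict_mono assms] by simp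

lemma f'_ge_minus_one: "u \<in> {0..<R} \<Longrightarrow> -1 \<le> f' u"
  using strict_mono_onD[OF f'_strict_mono, of 0 u] R_pos f'_0
  by (cases "u = 0") auto

lemma neg_slope_bounded:
  assumes u: "u \<in> {0<..<R}"
  shows "- f u / u \<le> 1 - f 0 / R"
proof -
  have "- f u < u - f 0"
    using f_above_tangent[of u 0] u R_pos f'_0 by auto
  then have "- f u / u < 1 - f 0 / u"
    using u by (simp add: field_simps)
  also have "\<dots> \<le> 1 - f 0 / R"
    using u f_0_pos by (simp add: frac_le)
  finally show ?thesis by simp
qed

lemma neg_slope_le_kappa: "u \<in> {0<..<R} \<Longrightarrow> - f u / u \<le> \<kappa>"
proof -
  have "bdd_above ((\<lambda>u. - f u / u) ` {0<..<R})"
    by (rule bdd_aboveI2, rule neg_slope_bounded)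
  then show "u \<in> {0<..<R} \<Longrightarrow> - f u / u \<le> \<kappa>"
    unfolding kappa_def by (rule cSUP_upper2) auto
qed

lemma kappa_pos: "0 < \<kappa>"
proof -
  obtain s where s: "s \<in> {0<..<R}" "f s < 0"
    using f_neg by auto
  then have "0 < - f s / s"
    by (simp add: divide_neg_pos)
  with neg_slope_le_kappa[OF s(1)] show ?thesis by simp
qed

lemma kappa_lt_one: "\<kappa> < 1"
proof -
  have "\<kappa> \<le> 1 - f 0 / R"
    unfolding kappa_def using neg_slope_bounded R_pos by (intro cSUP_least) auto
  moreover have "0 < f 0 / R"
    using f_0_pos R_pos by simp
  ultimately show ?thesis by simp
qed

lemma f_plus_kappa_not_bounded_away:
  assumes "0 < c" and bound: "\<And>u. u \<in> {0..<R} \<Longrightarrow> c \<le> f u + \<kappa> * u"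
  shows False
proof -
  have "- f u / u \<le> \<kappa> - c / R" if u: "u \<in> {0<..<R}" for u
  proof -
    have "c / R \<le> c / u"
      using u \<open>0 < c\<close> by (simp add: frac_le)
    also have "\<dots> \<le> (f u + \<kappa> * u) / u"
      using bound[of u] u by (simp add: divide_right_mono)
    also have "\<dots> = f u / u + \<kappa>"
      using u by (simp add: field_simps)
    finally show ?thesis by simp
  qed
  then have "\<kappa> \<le> \<kappa> - c / R"
    unfolding kappa_def using R_pos by (intro cSUP_least) auto
  moreover have "0 < c / R"
    using \<open>0 < c\<close> R_pos by simp
  ultimately show False
    by simp
qed

lemma lam_set_contains_0: "0 \<in> {u \<in> {0..<R}. \<kappa> + f' u < 0}"
  using R_pos f'_0 kappa_lt_one by simp

lemma lam_le_R: "\<Lambda> \<le> R"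
  unfolding lam_def using lam_set_contains_0 by (intro cSup_least) auto

lemma kappa_plus_f'_neg:
  assumes "0 \<le> u" "u < \<Lambda>"
  shows "\<kappa> + f' u < 0"
proof -
  obtain v where v: "v \<in> {0..<R}" "\<kappa> + f' v < 0" "u < v"
    using less_cSupD[OF _ assms(2)[unfolded lam_def]] lam_set_contains_0 by blast
  then have "f' u < f' v"
    using assms by (auto intro: strict_mono_onD[OF f'_strict_mono])
  with v show ?thesis by simp
qed

lemma kappa_plus_f'_nonneg:
  assumes "u < R" "\<Lambda> < u"
  shows "0 \<le> \<kappa> + f' u"
proof (rule ccontr)
  assume neg: "\<not> 0 \<le> \<kappa> + f' u"
  have bdd: "bdd_above {u \<in> {0..<R}. \<kappa> + f' u < 0}"
    by (rule bdd_aboveI[of _ R]) auto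
  have "0 \<le> \<Lambda>"
    unfolding lam_def by (rule cSup_upper[OF lam_set_contains_0 bdd])
  with assms neg have "u \<in> {u \<in> {0..<R}. \<kappa> + f' u < 0}"
    by auto
  then have "u \<le> \<Lambda>"
    unfolding lam_def by (rule cSup_upper[OF _ bdd])
  with assms show False by simp
qed

text \<open>Otherwise the convex function f u + \<kappa> * u would be bounded away from zero.\<close>
lemma tangent_negative_at_lam:
  assumes "0 \<le> t" "t < \<Lambda>"
  shows "f t + \<kappa> * t + (f' t + \<kappa>) * (\<Lambda> - t) < 0"
proof (rule ccontr)
  assume "\<not> ?thesis"
  then have tangent: "0 \<le> f t + \<kappa> * t + (f' t + \<kappa>) * (\<Lambda> - t)"
    by simp
  have deriv_h: "((\<lambda>u. f u + \<kappa> * u) has_real_derivative f' x + \<kappa>) (at x within {0..<R})"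
    if "x \<in> {0..<R}" for x
    using deriv[OF that] by (auto intro!: derivative_eq_intros)
  have mono_h': "strict_mono_on {0..<R} (\<lambda>u. f' u + \<kappa>)"
    using f'_strict_mono by (simp add: strict_mono_on_def)
  have "connected {0..<R}" and "{t..<\<Lambda>} \<subseteq> {0..<R}"
    using assms lam_le_R by auto
  moreover have "f' u + \<kappa> < 0" if "u \<in> {0..<R}" "u < \<Lambda>" for u
    using kappa_plus_f'_neg[of u] that by simp
  moreover have "0 \<le> f' u + \<kappa>" if "u \<in> {0..<R}" "\<Lambda> < u" for u
    using kappa_plus_f'_nonneg[of u] that by simp
  ultimately obtain c where "0 < c" "\<And>u. u \<in> {0..<R} \<Longrightarrow> c \<le> f u + \<kappa> * u"
    using pos_lower_bound_from_tangent[OF deriv_h _ mono_h' \<open>t < \<Lambda>\<close> _ _ _ tangent] by blast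
  then show False
    by (rule f_plus_kappa_not_bounded_away)
qed

lemma short_step_below_lam:
  assumes t: "0 \<le> t" "t < \<Lambda>" and "0 \<le> \<sigma>" "- (f' t + \<kappa>) * \<sigma> \<le> f t + \<kappa> * t"
  shows "t + \<sigma> < \<Lambda>"
proof -
  have "- (f' t + \<kappa>) * \<sigma> < - (f' t + \<kappa>) * (\<Lambda> - t)"
    using tangent_negative_at_lam[OF t] assms(4) by (simp add: algebra_simps)
  moreover have "0 < - (f' t + \<kappa>)"
    using kappa_plus_f'_neg[OF t] by simp
  ultimately show ?thesis
    by (simp add: mult_less_cancel_left_pos)
qed

lemma f_below_quadratic_model:
  assumes t: "0 \<le> t" "t < \<Lambda>" and h_pos: "0 < f t + \<kappa> * t"
    and \<sigma>: "0 < \<sigma>" "- (f' t + \<kappa>) * \<sigma> \<le> f t + \<kappa> * t"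
  shows "f (t + \<sigma>) < f t + f' t * \<sigma> + (f' t + \<kappa>)\<^sup>2 * \<sigma>\<^sup>2 / (2 * (f t + \<kappa> * t))"
proof -
  define a where "a = - (f' t + \<kappa>)"
  define H where "H = f t + \<kappa> * t"
  define L where "L = t + H / a"
  have "0 < a" "0 < H"
    using kappa_plus_f'_neg[OF t] h_pos by (simp_all add: a_def H_def)
  have "H < a * (\<Lambda> - t)"
    using tangent_negative_at_lam[OF t] by (simp add: a_def H_def algebra_simps)
  then have "t < L" "L < \<Lambda>"
    using \<open>0 < a\<close> \<open>0 < H\<close> by (simp_all add: L_def field_simps)
  then have L: "L \<in> {0..<R}"
    using t lam_le_R by auto
  have "t + \<sigma> \<le> L"
    using \<sigma> \<open>0 < a\<close> by (simp add: L_def a_def H_def field_simps)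
  then have "f (t + \<sigma>) \<le> f t + f' t * \<sigma> + (f' L - f' t) / (L - t) * \<sigma>\<^sup>2 / 2"
    using convex_deriv_quadratic_upper_bound[OF deriv _ f'_convex _ L \<open>t < L\<close>, of "t + \<sigma>"]
      t \<sigma> \<open>L < \<Lambda>\<close> lam_le_R by simp
  also have "(f' L - f' t) / (L - t) * \<sigma>\<^sup>2 < a\<^sup>2 / H * \<sigma>\<^sup>2"
  proof -
    have "f' L - f' t < a"
      using kappa_plus_f'_neg[of L] \<open>t < L\<close> \<open>L < \<Lambda>\<close> t by (simp add: a_def)
    then have "(f' L - f' t) / (L - t) < a / (L - t)"
      using \<open>t < L\<close> by (simp add: divide_strict_right_mono)
    also have "a / (L - t) = a\<^sup>2 / H"
      using \<open>0 < a\<close> by (simp add: L_def power2_eq_square)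
    finally show ?thesis
      using \<sigma> by (intro mult_strict_right_mono) auto
  qed
  finally have "f (t + \<sigma>) < f t + f' t * \<sigma> + a\<^sup>2 / H * \<sigma>\<^sup>2 / 2"
    by simp
  moreover have "a\<^sup>2 = (f' t + \<kappa>)\<^sup>2"
    unfolding a_def by (rule power2_minus)
  ultimately show ?thesis
    by (simp add: H_def mult.commute)
qed

lemma le_ThetaD: "\<theta> \<le> Theta f R \<Longrightarrow> \<theta> * (2 - \<kappa>) \<le> \<kappa>"
  using kappa_lt_one by (simp add: Theta_def le_divide_eq)

lemma newton_step:
  assumes \<theta>: "0 \<le> \<theta>" "\<theta> \<le> Theta f R" and inO: "(t, \<epsilon>) \<in> Omega f f' R"
  defines "t' \<equiv> t - (1 + \<theta>) * (f t + \<epsilon>) / f' t" and "\<epsilon>' \<equiv> \<epsilon> + 2 * \<theta> * (f t + \<epsilon>)"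
  shows "(t', \<epsilon>') \<in> Omega f f' R \<and> t < t' \<and> \<epsilon> \<le> \<epsilon>' \<and> f t' + \<epsilon>' < (1 + \<theta>\<^sup>2) / 2 * (f t + \<epsilon>)"
proof -
  from inO have t: "0 \<le> t" "t < \<Lambda>" and \<epsilon>: "0 \<le> \<epsilon>" "\<epsilon> \<le> \<kappa> * t" and "0 < f t + \<epsilon>"
    by (auto simp: Omega_def)
  define g where "g = f t + \<epsilon>"
  define a where "a = - (f' t + \<kappa>)"
  define H where "H = f t + \<kappa> * t"
  define \<sigma> where "\<sigma> = (1 + \<theta>) * g / (a + \<kappa>)"
  have a: "0 < a" "a + \<kappa> \<le> 1"
    using kappa_plus_f'_neg[OF t] f'_ge_minus_one[of t] t lam_le_R by (auto simp: a_def)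
  have g: "0 < g" "g \<le> H"
    using \<open>0 < f t + \<epsilon>\<close> \<epsilon> by (auto simp: g_def H_def)
  note arith = kappa_pos \<theta>(1) le_ThetaD[OF \<theta>(2)] a g
  have t': "t' = t + \<sigma>" and f'_\<sigma>: "f' t * \<sigma> = - (1 + \<theta>) * g"
    using a kappa_pos by (auto simp: t'_def \<sigma>_def g_def a_def field_simps)
  have "0 < \<sigma>"
    using a kappa_pos g \<theta> by (simp add: \<sigma>_def)
  have short: "- (f' t + \<kappa>) * \<sigma> \<le> f t + \<kappa> * t"
    using relaxed_step_below_newton_step[OF arith] by (simp add: \<sigma>_def a_def H_def)
  then have "t' < \<Lambda>"
    using short_step_below_lam[OF t] \<open>0 < \<sigma>\<close> by (simp add: t')
  have "\<epsilon>' \<le> \<kappa> * t'"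
    using relaxed_step_error_growth[OF arith] \<epsilon> by (simp add: \<sigma>_def \<epsilon>'_def t' g_def algebra_simps)
  have "f t + f' t * \<sigma> < f t'"
    using f_above_tangent[of t' t] t \<open>t' < \<Lambda>\<close> \<open>0 < \<sigma>\<close> lam_le_R by (auto simp: t')
  then have "\<theta> * g < f t' + \<epsilon>'"
    unfolding f'_\<sigma> by (simp add: \<epsilon>'_def g_def algebra_simps)
  have "f t' < f t + f' t * \<sigma> + (f' t + \<kappa>)\<^sup>2 * \<sigma>\<^sup>2 / (2 * H)"
    using f_below_quadratic_model[OF t _ \<open>0 < \<sigma>\<close> short] g by (simp add: t' H_def)
  moreover have "(f' t + \<kappa>)\<^sup>2 = a\<^sup>2"
    unfolding a_def by (rule power2_minus[symmetric])
  ultimately have "f t' + \<epsilon>' < \<theta> * g + a\<^sup>2 * \<sigma>\<^sup>2 / (2 * H)"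
    unfolding f'_\<sigma> by (simp add: \<epsilon>'_def g_def algebra_simps)
  also have "\<dots> \<le> \<theta> * g + (1 - \<theta>)\<^sup>2 * g / 2"
    using relaxed_step_quadratic_term[OF arith] by (simp add: \<sigma>_def)
  also have "\<dots> = (1 + \<theta>\<^sup>2) / 2 * g"
    by (simp add: power2_eq_square field_simps)
  finally have decrease: "f t' + \<epsilon>' < (1 + \<theta>\<^sup>2) / 2 * g" .
  have "0 \<le> \<theta> * g"
    using \<theta>(1) g by simp
  then have "t < t'" "\<epsilon> \<le> \<epsilon>'" "0 < f t' + \<epsilon>'"
    using \<open>0 < \<sigma>\<close> \<open>\<theta> * g < f t' + \<epsilon>'\<close> by (simp_all add: t' \<epsilon>'_def flip: g_def)
  with decrease show ?thesis
    using t \<epsilon> \<open>t' < \<Lambda>\<close> \<open>\<epsilon>' \<le> \<kappa> * t'\<close> by (auto simp: Omega_def g_def)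
qed

end

theorem lemma4p2:
  fixes f f' :: "real \<Rightarrow> real" and R \<theta> t \<epsilon> :: real
  assumes deriv: "\<And>x. x \<in> {0..<R} \<Longrightarrow> (f has_real_derivative f' x) (at x within {0..<R})"
    and "continuous_on {0..<R} f'"
    and h1: "f 0 > 0" "f' 0 = -1"
    and h2: "strict_mono_on {0..<R} f'" "convex_on {0..<R} f'"
    and h3: "\<exists>s\<in>{0<..<R}. f s < 0"
    and theta: "0 \<le> \<theta>" "\<theta> \<le> Theta f R"
    and inO: "(t, \<epsilon>) \<in> Omega f f' R"
  shows "(t - (1 + \<theta>) * (f t + \<epsilon>) / f' t, \<epsilon> + 2 * \<theta> * (f t + \<epsilon>)) \<in> Omega f f' R
       \<and> t < t - (1 + \<theta>) * (f t + \<epsilon>) / f' t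
       \<and> \<epsilon> \<le> \<epsilon> + 2 * \<theta> * (f t + \<epsilon>)
       \<and> f (t - (1 + \<theta>) * (f t + \<epsilon>) / f' t) + (\<epsilon> + 2 * \<theta> * (f t + \<epsilon>))
           < ((1 + \<theta>^2) / 2) * (f t + \<epsilon>)"
proof -
  interpret newton_setting f f' R
    using deriv h1 h2 h3 by unfold_locales auto
  show ?thesis
    using newton_step[OF theta inO] by simp
qed

end
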